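(* Let $\mathcal{A}$ be a Banach algebra such that $\mathrm{rad}(\mathcal{A})=\mathrm{rann}(\mathcal{A})$ and $\mathcal{A}/\mathrm{rad}(\mathcal{A})$ is commutative, suppose $\mathcal{A}$ has a right identity, and let $z\in\mathcal{A}$. Then the following are equivalent: (i) $L_z$ is centralizing; (ii) $L_z$ is skew centralizing; (iii) $z\in Z(\mathcal{A})$.
   Context: $\mathrm{rad}(\mathcal{A})$ is the Jacobson radical and $\mathrm{rann}(\mathcal{A})=\{c\in\mathcal{A}: ac=0\ \forall a\in\mathcal{A}\}$. $L_z(a)=za$. $Z(\mathcal{A})$ is the center. A map $T$ is centralizing if $[T(a),a]=T(a)a-aT(a)\in Z(\mathcal{A})$ for all $a$, and skew centralizing if $\langle T(a),a\rangle=T(a)a+aT(a)\in Z(\mathcal{A})$ for all $a$. *)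

theory Defs
  imports "HOL-Analysis.Analysis"
begin

text \<open>Banach algebras are modelled by the type class
  real_normed_algebra + banach (associative, not necessarily unital).\<close>

text \<open>Left quasi-regularity: a is left quasi-regular if there is b with
  b + a - b a = 0 (i.e. (1-b)(1-a) = 1 in the unitization).\<close>
definition left_quasi_regular :: "'a::ring \<Rightarrow> bool" where
  "left_quasi_regular a \<longleftrightarrow> (\<exists>b. b + a - b * a = 0)"

definition jacobson_rad :: "'a::ring set" where
  "jacobson_rad = {a. \<forall>x. left_quasi_regular (x * a)}"

definition rann :: "'a::ring set" where
  "rann = {c. \<forall>a. a * c = 0}"

definition center :: "'a::ring set" where
  "center = {c. \<forall>a. c * a = a * c}"

definition L_mult :: "'a::ring \<Rightarrow> 'a \<Rightarrow> 'a" where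
  "L_mult z a = z * a"

definition centralizing :: "('a::ring \<Rightarrow> 'a) \<Rightarrow> bool" where
  "centralizing T \<longleftrightarrow> (\<forall>a. T a * a - a * T a \<in> center)"

definition skew_centralizing :: "('a::ring \<Rightarrow> 'a) \<Rightarrow> bool" where
  "skew_centralizing T \<longleftrightarrow> (\<forall>a. T a * a + a * T a \<in> center)"

definition quotient_rad_commutative :: "'a::ring itself \<Rightarrow> bool" where
  "quotient_rad_commutative _ \<longleftrightarrow> (\<forall>a b::'a. a * b - b * a \<in> jacobson_rad)"

end

theory Submission
  imports Defs
begin

text \<open>Only the algebra matters. Since every commutator lies in
  \<open>rad(A) = rann(A)\<close>, all products satisfy \<open>x u v = x v u\<close>. For \<open>T = L\<^sub>z\<close> this
  turns both \<open>[T a, a]\<close> and \<open>\<langle>T a, a\<rangle>\<close> into expressions in \<open>z a\<^sup>2\<close> and \<open>a\<^sup>2 z\<close>;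
  multiplying by the right identity \<open>e\<close> on both sides of such a central element shows
  \<open>e z = z\<close> and that \<open>z\<close> commutes with every square, and expanding
  \<open>(a + e)\<^sup>2\<close> then shows that \<open>z\<close> commutes with every \<open>a\<close>.\<close>

lemma mult_right_permute_if_rad_eq_rann:
  fixes x u v :: "'a::ring"
  assumes "(jacobson_rad :: 'a set) = rann"
    and "quotient_rad_commutative TYPE('a)"
  shows "x * u * v = x * v * u"
proof -
  have "u * v - v * u \<in> (rann :: 'a set)"
    using assms unfolding quotient_rad_commutative_def by blast
  then have "x * (u * v - v * u) = 0"
    unfolding rann_def by blast
  then show ?thesis
    by (simp add: right_diff_distrib mult.assoc)
qed

lemma central_rann_eq_0:
  fixes c e :: "'a::ring"
  assumes "c \<in> center" and "c \<in> rann" and "\<And>a. a * e = a"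
  shows "c = 0"
proof -
  have "c = c * e" using assms(3) by simp
  also have "\<dots> = e * c" using assms(1) unfolding center_def by simp
  also have "\<dots> = 0" using assms(2) unfolding rann_def by simp
  finally show ?thesis .
qed

lemma centralizing_L_mult_if_center:
  fixes z :: "'a::ring"
  assumes "z \<in> center"
  shows "centralizing (L_mult z)"
proof -
  have "a * (z * a) = z * a * a" for a
    using assms unfolding center_def by (simp add: mult.assoc)
  moreover have "(0::'a) \<in> center"
    unfolding center_def by simp
  ultimately show ?thesis
    unfolding centralizing_def L_mult_def by simp
qed

context
  assumes mult_right_permute: "\<And>x u v :: 'a::ring. x * u * v = x * v * u"
begin

lemma mult_sandwich_eq_square_mult: "a * (z * a) = a * a * (z :: 'a)"
  by (metis mult_right_permute mult.assoc)

lemma center_mult_closed: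
  assumes "z \<in> center"
  shows "z * x \<in> (center :: 'a set)"
proof -
  have "z * x * b = b * (z * x)" for b
  proof -
    have "z * x * b = z * b * x" by (rule mult_right_permute)
    also have "\<dots> = b * (z * x)"
      using assms unfolding center_def by (simp add: mult.assoc)
    finally show ?thesis .
  qed
  then show ?thesis unfolding center_def by blast
qed

lemma skew_centralizing_L_mult_if_center:
  assumes "(z :: 'a) \<in> center"
  shows "skew_centralizing (L_mult z)"
proof -
  have "z * a * a + a * (z * a) = z * (a + a) * a" for a
    using assms unfolding center_def by (simp add: distrib_left distrib_right mult.assoc)
  then show ?thesis
    unfolding skew_centralizing_def L_mult_def
    using center_mult_closed[OF assms] by (simp add: mult.assoc)
qed

context
  fixes e :: 'a
  assumes right_unit: "\<And>a. a * e = a"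
begin

lemma center_if_commutes_with_squares:
  fixes z :: 'a
  assumes ez: "e * z = z" and sq: "\<And>a. z * (a * a) = a * a * z"
  shows "z \<in> center"
proof -
  have "z * a = a * z" for a
  proof -
    have "z * (e * a) = z * a"
      by (metis right_unit mult.assoc)
    moreover have "e * a * z = z * a"
      by (metis mult_right_permute ez)
    moreover have "z * ((a + e) * (a + e)) = (a + e) * (a + e) * z"
      by (rule sq)
    then have "z * (a * a) + z * (a * e) + z * (e * a) + z * (e * e)
             = a * a * z + a * e * z + e * a * z + e * e * z"
      by (simp add: algebra_simps)
    ultimately show ?thesis
      using sq[of a] right_unit ez by simp
  qed
  then show ?thesis unfolding center_def by auto
qed

lemma center_if_centralizing_L_mult:
  fixes z :: 'a
  assumes "centralizing (L_mult z)"
  shows "z \<in> center"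
proof -
  have sq: "z * (a * a) = a * a * z" for a
  proof -
    have "z * a * a - a * (z * a) \<in> center"
      using assms unfolding centralizing_def L_mult_def by blast
    then have "z * (a * a) - a * a * z \<in> center"
      by (simp only: mult_sandwich_eq_square_mult mult.assoc[of z])
    moreover have "z * (a * a) - a * a * z \<in> rann"
      unfolding rann_def
      by (simp add: right_diff_distrib) (metis mult_right_permute mult.assoc)
    ultimately have "z * (a * a) - a * a * z = 0"
      by (rule central_rann_eq_0[OF _ _ right_unit])
    then show ?thesis by simp
  qed
  moreover have "e * z = z"
    using sq[of e] right_unit by simp
  ultimately show ?thesis
    by (rule center_if_commutes_with_squares[rotated])
qed

lemma center_if_skew_centralizing_L_mult:
  fixes z :: 'a
  assumes "skew_centralizing (L_mult z)"
  shows "z \<in> center"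
proof -
  have skew: "z * a * a + a * (z * a) = e * z * a * a + e * z * a * a" for a
  proof -
    have "z * a * a + a * (z * a) \<in> center"
      using assms unfolding skew_centralizing_def L_mult_def by blast
    then have "(z * a * a + a * (z * a)) * e = e * (z * a * a + a * (z * a))"
      unfolding center_def mem_Collect_eq by (rule spec)
    then have "z * a * a + a * (z * a) = e * (z * a * a + a * (z * a))"
      by (simp only: right_unit)
    also have "\<dots> = e * z * a * a + e * a * z * a"
      by (simp add: algebra_simps)
    also have "e * a * z * a = e * z * a * a"
      by (metis mult_right_permute)
    finally show ?thesis .
  qed
  have ez: "e * z = z"
    using skew[of e] right_unit by (simp add: mult.assoc)
  have "z * (a * a) = a * a * z" for a
    using skew[of a] ez mult_sandwich_eq_square_mult by (simp add: mult.assoc)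
  with ez show ?thesis
    by (rule center_if_commutes_with_squares)
qed

end

end

theorem theorem5p5:
  fixes z :: "'a::{real_normed_algebra, banach}"
  assumes "(jacobson_rad :: 'a set) = rann"
    and "quotient_rad_commutative TYPE('a)"
    and "\<exists>e::'a. \<forall>a. a * e = a"
  shows "(centralizing (L_mult z) \<longleftrightarrow> skew_centralizing (L_mult z))
       \<and> (skew_centralizing (L_mult z) \<longleftrightarrow> z \<in> center)"
proof -
  note permute = mult_right_permute_if_rad_eq_rann[OF assms(1,2)]
  obtain e :: 'a where e: "\<And>a. a * e = a"
    using assms(3) by blast
  have "centralizing (L_mult z) \<longleftrightarrow> z \<in> center"
    using center_if_centralizing_L_mult[OF permute e] centralizing_L_mult_if_center by blast
  moreover have "skew_centralizing (L_mult z) \<longleftrightarrow> z \<in> center"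
    using center_if_skew_centralizing_L_mult[OF permute e]
      skew_centralizing_L_mult_if_center[OF permute] by blast
  ultimately show ?thesis by blast
qed

end
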